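(* Let $w,w'\in[0,1]$ with $w+w'=1$, and let $\textbf{F}$ be a $gH$-differentiable IVF on a nonempty subset $\mathcal{X}$ of $\mathbb{R}^n$. Then \[\lVert\mathcal{W}(\nabla\textbf{F}(x))-\mathcal{W}(\nabla\textbf{F}(y))\rVert\le\lVert\nabla\textbf{F}(x)\ominus_{gH}\nabla\textbf{F}(y)\rVert_{I(\mathbb{R})^n}\quad\text{for all }x,y\in\mathcal{X},\] where the left-hand norm is the Euclidean norm on $\mathbb{R}^n$.
   Context: $I(\mathbb{R})$: closed bounded intervals $\textbf{A}=[\underline{a},\overline{a}]$ with Moore arithmetic ($\oplus$ endpointwise; $\lambda\odot\textbf{A}=[\lambda\underline{a},\lambda\overline{a}]$ if $\lambda\ge0$, $[\lambda\overline{a},\lambda\underline{a}]$ if $\lambda<0$); $\textbf{A}\ominus_{gH}\textbf{B}=[\min\{\underline{a}-\underline{b},\overline{a}-\overline{b}\},\max\{\underline{a}-\underline{b},\overline{a}-\overline{b}\}]$ (componentwise on $I(\mathbb{R})^n$). Norms: $\lVert\textbf{A}\rVert_{I(\mathbb{R})}=\max\{|\underline{a}|,|\overline{a}|\}$; $\lVert(\textbf{A}_1,\dots,\textbf{A}_n)\rVert_{I(\mathbb{R})^n}=\sum_i\lVert\textbf{A}_i\rVert_{I(\mathbb{R})}$. $D_i\textbf{F}(x)=\lim_{h\to0}\frac1h\odot(\textbf{F}(x+he_i)\ominus_{gH}\textbf{F}(x))$, $\nabla\textbf{F}(x)=(D_1\textbf{F}(x),\dots,D_n\textbf{F}(x))^T$.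 Linear IVF: $\textbf{L}(x)=\bigoplus_i x_i\odot\textbf{L}(e_i)$. $\textbf{F}$ is $gH$-differentiable at $\bar{x}$ if there exist a linear IVF $\textbf{L}_{\bar{x}}$, an IVF $\textbf{E}(\textbf{F}(\bar{x});d)$ and $\delta>0$ with $(\textbf{F}(\bar{x}+d)\ominus_{gH}\textbf{F}(\bar{x}))\ominus_{gH}\textbf{L}_{\bar{x}}(d)=\lVert d\rVert\odot\textbf{E}(\textbf{F}(\bar{x});d)$ for $\lVert d\rVert<\delta$ and $\textbf{E}\to\textbf{0}$ as $\lVert d\rVert\to0$. $\mathcal{W}(\textbf{A}_1,\dots,\textbf{A}_n)=(w\underline{a}_1+w'\overline{a}_1,\dots,w\underline{a}_n+w'\overline{a}_n)^T$. *)

theory Defs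
  imports "HOL-Analysis.Analysis"
begin

text \<open>Closed bounded intervals are represented as pairs (lower endpoint, upper endpoint);
  a pair A is a genuine interval iff fst A \<le> snd A.  Moore addition is endpointwise,
  which coincides with the componentwise addition on real \<times> real.\<close>

type_synonym ivl = "real \<times> real"

definition ivl_valid :: "ivl \<Rightarrow> bool" where
  "ivl_valid A \<longleftrightarrow> fst A \<le> snd A"

definition ivl_scale :: "real \<Rightarrow> ivl \<Rightarrow> ivl" where
  "ivl_scale l A = (if l \<ge> 0 then (l * fst A, l * snd A) else (l * snd A, l * fst A))"

definition gH_minus :: "ivl \<Rightarrow> ivl \<Rightarrow> ivl" where
  "gH_minus A B = (min (fst A - fst B) (snd A - snd B), max (fst A - fst B) (snd A - snd B))"

definition ivl_norm :: "ivl \<Rightarrow> real" where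
  "ivl_norm A = max \<bar>fst A\<bar> \<bar>snd A\<bar>"

definition gH_minus_vec :: "ivl ^ 'n \<Rightarrow> ivl ^ 'n \<Rightarrow> ivl ^ 'n" where
  "gH_minus_vec A B = (\<chi> i. gH_minus (A $ i) (B $ i))"

definition ivlvec_norm :: "ivl ^ 'n::finite \<Rightarrow> real" where
  "ivlvec_norm A = (\<Sum>i\<in>UNIV. ivl_norm (A $ i))"

definition gH_partial :: "'n::finite \<Rightarrow> (real ^ 'n \<Rightarrow> ivl) \<Rightarrow> real ^ 'n \<Rightarrow> ivl" where
  "gH_partial i F x =
     Lim (at 0) (\<lambda>h. ivl_scale (1 / h) (gH_minus (F (x + h *\<^sub>R axis i 1)) (F x)))"

definition gH_grad :: "(real ^ 'n::finite \<Rightarrow> ivl) \<Rightarrow> real ^ 'n \<Rightarrow> ivl ^ 'n" where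
  "gH_grad F x = (\<chi> i. gH_partial i F x)"

definition linear_ivf :: "(real ^ 'n::finite \<Rightarrow> ivl) \<Rightarrow> bool" where
  "linear_ivf L \<longleftrightarrow> (\<forall>x. L x = (\<Sum>i\<in>UNIV. ivl_scale (x $ i) (L (axis i 1))))"

definition gH_differentiable_at :: "(real ^ 'n::finite \<Rightarrow> ivl) \<Rightarrow> real ^ 'n \<Rightarrow> bool" where
  "gH_differentiable_at F xb \<longleftrightarrow>
     (\<exists>L E \<delta>. linear_ivf L \<and> \<delta> > 0 \<and>
        (\<forall>d. norm d < \<delta> \<longrightarrow>
           gH_minus (gH_minus (F (xb + d)) (F xb)) (L d) = ivl_scale (norm d) (E d)) \<and>
        (E \<longlongrightarrow> (0, 0)) (at 0))"

definition W_map :: "real \<Rightarrow> real \<Rightarrow> ivl ^ 'n \<Rightarrow> real ^ 'n" where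
  "W_map w w' A = (\<chi> i. w * fst (A $ i) + w' * snd (A $ i))"

end

theory Submission
  imports Defs
begin

text \<open>In each coordinate the W-combination of the difference of two interval vectors is a convex
  combination of the differences of lower and of upper endpoints, so its absolute value is at most
  the larger of the two, which is exactly the norm of the gH-difference of the coordinates.
  Summing over the coordinates bounds the l1 norm of the difference, which dominates the
  Euclidean norm.\<close>

lemma abs_convex_comb_le_max_abs:
  fixes w w' p q :: real
  assumes "0 \<le> w" "0 \<le> w'" "w + w' = 1"
  shows "\<bar>w * p + w' * q\<bar> \<le> max \<bar>p\<bar> \<bar>q\<bar>"
proof -
  have "\<bar>w * p + w' * q\<bar> \<le> w * \<bar>p\<bar> + w' * \<bar>q\<bar>"
    using assms abs_triangle_ineq[of "w * p" "w' * q"] by (simp add: abs_mult)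
  also have "\<dots> \<le> w * max \<bar>p\<bar> \<bar>q\<bar> + w' * max \<bar>p\<bar> \<bar>q\<bar>"
    using assms by (intro add_mono mult_left_mono) auto
  also have "\<dots> = max \<bar>p\<bar> \<bar>q\<bar>"
    using assms by (metis distrib_right mult_1)
  finally show ?thesis .
qed

lemma ivl_norm_gH_minus:
  "ivl_norm (gH_minus A B) = max \<bar>fst A - fst B\<bar> \<bar>snd A - snd B\<bar>"
  unfolding ivl_norm_def gH_minus_def by auto

lemma W_map_diff_nth:
  "(W_map w w' A - W_map w w' B) $ i
     = w * (fst (A $ i) - fst (B $ i)) + w' * (snd (A $ i) - snd (B $ i))"
  unfolding W_map_def by (simp add: algebra_simps)

lemma abs_W_map_diff_nth_le:
  assumes "0 \<le> w" "0 \<le> w'" "w + w' = 1"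
  shows "\<bar>(W_map w w' A - W_map w w' B) $ i\<bar> \<le> ivl_norm (gH_minus (A $ i) (B $ i))"
  unfolding W_map_diff_nth ivl_norm_gH_minus
  using abs_convex_comb_le_max_abs[OF assms] .

lemma norm_W_map_diff_le_ivlvec_norm:
  fixes A B :: "ivl ^ 'n::finite"
  assumes "0 \<le> w" "0 \<le> w'" "w + w' = 1"
  shows "norm (W_map w w' A - W_map w w' B) \<le> ivlvec_norm (gH_minus_vec A B)"
proof -
  have "norm (W_map w w' A - W_map w w' B) \<le> (\<Sum>i\<in>UNIV. \<bar>(W_map w w' A - W_map w w' B) $ i\<bar>)"
    by (rule norm_le_l1_cart)
  also have "\<dots> \<le> (\<Sum>i\<in>UNIV. ivl_norm (gH_minus (A $ i) (B $ i)))"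
    using abs_W_map_diff_nth_le[OF assms] by (rule sum_mono)
  also have "\<dots> = ivlvec_norm (gH_minus_vec A B)"
    unfolding ivlvec_norm_def gH_minus_vec_def by simp
  finally show ?thesis .
qed

text \<open>The inequality holds for arbitrary interval vectors.\<close>

theorem lemma5p3:
  fixes w w' :: real
    and F :: "real ^ 'n::finite \<Rightarrow> ivl"
    and X :: "(real ^ 'n) set"
  assumes "0 \<le> w" "w \<le> 1" "0 \<le> w'" "w' \<le> 1" "w + w' = 1"
    and "X \<noteq> {}"
    and "\<forall>x\<in>X. ivl_valid (F x)"
    and "\<forall>x\<in>X. gH_differentiable_at F x"
  shows "\<forall>x\<in>X. \<forall>y\<in>X.
           norm (W_map w w' (gH_grad F x) - W_map w w' (gH_grad F y))
             \<le> ivlvec_norm (gH_minus_vec (gH_grad F x) (gH_grad F y))"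
  using norm_W_map_diff_le_ivlvec_norm[OF assms(1,3,5)] by blast

end
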